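(* Let $m,n\ge 1$ and $1\le r<n$ be integers. Let $J\in\mathbb{C}^{m\times m}$ be unitary, let $p_1,\dots,p_n\in\mathbb{C}$, and let $H_1,\dots,H_n\in\mathbb{C}^{m}$ (column vectors) be nonzero with $H_i^\dagger H_i=-(p_i+p_i^* )$ for every $i$ (so $\mathrm{Re}\,p_i<0$). Define the first-order cavity transfer function matrices $$\tilde K_i(s)=I+\frac{H_iH_i^\dagger}{p_i-s},\qquad i=1,\dots,n,$$ the transfer function matrix $K(s)=J\tilde K_n(s)\tilde K_{n-1}(s)\cdots\tilde K_1(s)$, and the approximation $$K_a(s)=J_a\,\tilde K_r(s)\tilde K_{r-1}(s)\cdots\tilde K_1(s),\qquad J_a=J\,\tilde K_n(0)\tilde K_{n-1}(0)\cdots\tilde K_{r+1}(0).$$ Then $K_a(s)$ is physically realizable (it is lossless bounded real and admits a physically realizable state space realization), and the error $K_e(s)=K(s)-K_a(s)$ satisfies $$\|K_e(j\omega)\|\le\sum_{k=1}^{n-r}B_k(\omega)\quad\text{for all }\omega\ge 0,$$ where $\|\cdot\|$ is the induced (spectral) matrix norm, $j$ is the imaginary unit, and $$B_k(\omega)=\omega\sum_{r+1\le i_1<i_2<\dots<i_k\le n}C_{i_1,\dots,i_k}(\omega),$$ $$C_{i_1,\dots,i_k}(\omega)=\left|\sum_{q=0}^{k-1}(-j\omega)^{k-1-q}\,e_q(p_{i_1},\dots,p_{i_k})\right|\cdot\frac{\prod_{l=1}^k\big(-(p_{i_l}+p_{i_l}^* )\big)}{\prod_{l=1}^k|p_{i_l}|\,|p_{i_l}-j\omega|},$$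 with $e_q$ the $q$-th elementary symmetric polynomial ($e_0=1$).
   Context: A linear quantum system is given by $da=Fa\,dt+G\,du$, $dy=\bar H a\,dt+J\,du$ with $F\in\mathbb{C}^{n\times n}$, $G\in\mathbb{C}^{n\times m}$, $\bar H\in\mathbb{C}^{m\times n}$, $J\in\mathbb{C}^{m\times m}$; its transfer function is $\bar H(sI-F)^{-1}G+J$. It is physically realizable if there exist $\Theta=\Theta^\dagger>0$, $\Lambda$, $M=M^\dagger$, $S$ with $S^\dagger S=I$ such that $F=-\Theta(iM+\tfrac12\Lambda^\dagger\Lambda)$, $G=-\Theta\Lambda^\dagger S$, $\bar H=\Lambda$, $J=S$; equivalently, there is $\Theta=\Theta^\dagger>0$ with $F\Theta+\Theta F^\dagger+GG^\dagger=0$, $G=-\Theta\bar H^\dagger J$, $J^\dagger J=I$. A transfer function matrix $\Phi(s)$ realized by $(F,G,\bar H,J)$ is lossless bounded real if $F$ is Hurwitz and $\Phi(i\omega)^\dagger\Phi(i\omega)=I$ for all real $\omega$. $^\dagger$ denotes conjugate transpose and $^*$ complex conjugation. Each $\tilde K_i$ is the transfer function of the generalized cavity $da_i=p_ia_i\,dt-H_i^\dagger du$, $dy=H_ia_i\,dt+du$. *)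

theory Defs
  imports "HOL-Analysis.Analysis" "Jordan_Normal_Form.Gauss_Jordan_Elimination"
    "Jordan_Normal_Form.Char_Poly"
begin

definition adj :: "complex mat \<Rightarrow> complex mat" where
  "adj A = mat (dim_col A) (dim_row A) (\<lambda>(i,j). cnj (A $$ (j,i)))"

definition vnorm :: "complex vec \<Rightarrow> real" where
  "vnorm v = sqrt (\<Sum>i<dim_vec v. (cmod (v $ i))\<^sup>2)"

definition opnorm :: "complex mat \<Rightarrow> real" where
  "opnorm A = Sup {vnorm (A *\<^sub>v x) | x. x \<in> carrier_vec (dim_col A) \<and> vnorm x \<le> 1}"

(* matrix inverse of a square matrix (meaningful when invertible) *)
definition minv :: "complex mat \<Rightarrow> complex mat" where
  "minv A = the (mat_inverse A)"

definition hermitian :: "complex mat \<Rightarrow> bool" where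
  "hermitian A \<longleftrightarrow> adj A = A"

definition pos_def :: "complex mat \<Rightarrow> bool" where
  "pos_def A \<longleftrightarrow> dim_row A = dim_col A \<and> hermitian A \<and>
     (\<forall>x \<in> carrier_vec (dim_col A). x \<noteq> 0\<^sub>v (dim_col A) \<longrightarrow>
        0 < Re (\<Sum>a<dim_col A. cnj (x $ a) * (A *\<^sub>v x) $ a))"

definition hurwitz :: "complex mat \<Rightarrow> bool" where
  "hurwitz F \<longleftrightarrow> (\<forall>k. eigenvalue F k \<longrightarrow> Re k < 0)"

definition phys_realizable :: "nat \<Rightarrow> nat \<Rightarrow> complex mat \<Rightarrow> complex mat \<Rightarrow> complex mat \<Rightarrow> complex mat \<Rightarrow> bool" where
  "phys_realizable N m F G H D \<longleftrightarrow>
     (\<exists>\<Theta> \<Lambda> M S. \<Theta> \<in> carrier_mat N N \<and> pos_def \<Theta> \<and>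
        \<Lambda> \<in> carrier_mat m N \<and> M \<in> carrier_mat N N \<and> hermitian M \<and>
        S \<in> carrier_mat m m \<and> adj S * S = 1\<^sub>m m \<and>
        F = - (\<Theta> * (\<i> \<cdot>\<^sub>m M + (1/2) \<cdot>\<^sub>m (adj \<Lambda> * \<Lambda>))) \<and>
        G = - (\<Theta> * adj \<Lambda> * S) \<and> H = \<Lambda> \<and> D = S)"

definition mprod :: "nat \<Rightarrow> complex mat list \<Rightarrow> complex mat" where
  "mprod m As = foldr (\<lambda>A B. A * B) As (1\<^sub>m m)"

definition cavity :: "nat \<Rightarrow> complex \<Rightarrow> complex vec \<Rightarrow> complex \<Rightarrow> complex mat" where
  "cavity m p h s = 1\<^sub>m m + (1 / (p - s)) \<cdot>\<^sub>m mat m m (\<lambda>(a,b). h $ a * cnj (h $ b))"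

definition cprod :: "nat \<Rightarrow> (nat \<Rightarrow> complex) \<Rightarrow> (nat \<Rightarrow> complex vec) \<Rightarrow> nat \<Rightarrow> nat \<Rightarrow> complex \<Rightarrow> complex mat" where
  "cprod m p H lo hi s = mprod m (map (\<lambda>i. cavity m (p i) (H i) s) (rev [lo..<Suc hi]))"

definition esym :: "nat \<Rightarrow> (nat \<Rightarrow> complex) \<Rightarrow> nat set \<Rightarrow> complex" where
  "esym q p I = (\<Sum>T \<in> {T. T \<subseteq> I \<and> card T = q}. \<Prod>i\<in>T. p i)"

definition Cterm :: "(nat \<Rightarrow> complex) \<Rightarrow> nat set \<Rightarrow> real \<Rightarrow> real" where
  "Cterm p I \<omega> =
     cmod (\<Sum>q<card I. (- \<i> * complex_of_real \<omega>) ^ (card I - 1 - q) * esym q p I) *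
     ((\<Prod>i\<in>I. - Re (p i + cnj (p i))) / (\<Prod>i\<in>I. cmod (p i) * cmod (p i - \<i> * complex_of_real \<omega>)))"

definition Bterm :: "nat \<Rightarrow> nat \<Rightarrow> (nat \<Rightarrow> complex) \<Rightarrow> nat \<Rightarrow> real \<Rightarrow> real" where
  "Bterm r n p k \<omega> = \<omega> * (\<Sum>I \<in> {I. I \<subseteq> {r+1..n} \<and> card I = k}. Cterm p I \<omega>)"

end

theory Submission imports Defs begin

(*
  The cavity  K_i(s) = I + H_i H_i^dagger/(p_i - s)  is unitary on the imaginary axis exactly
  because  H_i^dagger H_i = -(p_i + conj p_i).  Hence every ordered product of cavities, and in
  particular K_a(j w) = J_a K_r(j w) ... K_1(j w) with unitary J_a = J K_n(0) ... K_{r+1}(0),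
  is unitary (lossless).

  With Q(s) = K_n(s) ... K_{r+1}(s) and P(s) = K_r(s) ... K_1(s) we have
  K - K_a = J (Q(s) - Q(0)) P(s).  Since J and P(j w) are unitary, the norm of the error is the
  norm of Q(j w) - Q(0), and telescoping over the unitary factors gives
  ||Q(j w) - Q(0)|| <= sum_i ||K_i(j w) - K_i(0)|| = sum_i w C_{i}(w) = B_1(w).
  As all B_k are nonnegative this yields the stated bound  sum_k B_k(w)  (indeed a sharper one).

  The cascade K_r ... K_1 has the lower triangular state matrix F with diagonal
  p_1 .. p_r and entries -H_i^dagger H_j below the diagonal, output matrix
  Lambda = J_a [H_1 ... H_r] and input matrix -[H_1 ... H_r]^dagger.  It is physically
  realizable with Theta = I, and F is Hurwitz because its eigenvalues are the p_i.
  The transfer function identity is proved by computing the resolvent applied to the input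
  matrix row by row, using a telescoping formula for the partial cascade products.
*)

section \<open>Conjugate transpose and unitary matrices\<close>

lemma adj_carrier[simp]: "A \<in> carrier_mat a b \<Longrightarrow> adj A \<in> carrier_mat b a"
  unfolding adj_def by auto

lemma adj_index[simp]:
  "i < dim_col A \<Longrightarrow> j < dim_row A \<Longrightarrow> adj A $$ (i,j) = cnj (A $$ (j,i))"
  "dim_row (adj A) = dim_col A" "dim_col (adj A) = dim_row A"
  unfolding adj_def by auto

lemma adj_one[simp]: "adj (1\<^sub>m m) = 1\<^sub>m m"
  by (rule eq_matI) (auto simp: adj_def)

lemma adj_mult:
  assumes "A \<in> carrier_mat a b" "B \<in> carrier_mat b c"
  shows "adj (A * B) = adj B * adj A"
  by (rule eq_matI) (use assms in \<open>auto simp: scalar_prod_def mult.commute\<close>)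

lemma unitary_left_cancel:
  fixes U :: "complex mat"
  assumes "U \<in> carrier_mat m m" "adj U * U = 1\<^sub>m m" "B \<in> carrier_mat m k" "C \<in> carrier_mat m k'"
  shows "adj (U * B) * (U * C) = adj B * C"
proof -
  have "adj (U * B) * (U * C) = adj B * (adj U * (U * C))"
    using assms by (simp add: adj_mult[OF assms(1,3)] assoc_mult_mat[of _ k m _ m _ k'])
  also have "\<dots> = adj B * ((adj U * U) * C)"
    using assms by (subst assoc_mult_mat[of _ m m _ m _ k']) auto
  finally show ?thesis using assms by simp
qed

lemma unitary_mult:
  assumes "A \<in> carrier_mat m m" "B \<in> carrier_mat m m" "adj A * A = 1\<^sub>m m" "adj B * B = 1\<^sub>m m"
  shows "adj (A * B) * (A * B) = 1\<^sub>m m"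
  using unitary_left_cancel[OF assms(1,3,2,2)] assms(4) by simp

lemma minv_left:
  fixes A :: "complex mat"
  assumes A: "A \<in> carrier_mat n n" and d: "det A \<noteq> 0"
  shows "minv A * A = 1\<^sub>m n" "minv A \<in> carrier_mat n n"
proof -
  obtain B where B: "mat_inverse A = Some B"
  proof (cases "mat_inverse A")
    case None
    from mat_inverse(1)[OF A None, of "()"] det_non_zero_imp_unit[OF A d, of "()"]
    show ?thesis by simp
  qed
  from mat_inverse(2)[OF A B] B show "minv A * A = 1\<^sub>m n" "minv A \<in> carrier_mat n n"
    unfolding minv_def by auto
qed

section \<open>The Euclidean vector norm and the induced matrix norm\<close>

lemma vnorm_L2: "vnorm v = L2_set (\<lambda>i. cmod (v $ i)) {..<dim_vec v}"
  unfolding vnorm_def L2_set_def ..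

lemma vnorm_nonneg: "vnorm v \<ge> 0"
  unfolding vnorm_L2 by (rule L2_set_nonneg)

lemma vnorm_sq: "complex_of_real ((vnorm v)\<^sup>2) = (\<Sum>i<dim_vec v. cnj (v $ i) * v $ i)"
proof -
  have "(vnorm v)\<^sup>2 = (\<Sum>i<dim_vec v. (cmod (v $ i))\<^sup>2)"
    unfolding vnorm_def by (simp add: sum_nonneg)
  then have "complex_of_real ((vnorm v)\<^sup>2) = (\<Sum>i<dim_vec v. complex_of_real ((cmod (v $ i))\<^sup>2))"
    by simp
  also have "\<dots> = (\<Sum>i<dim_vec v. cnj (v $ i) * v $ i)"
    by (rule sum.cong[OF refl]) (simp only: complex_norm_square mult.commute)
  finally show ?thesis .
qed

lemma vnorm_zero[simp]: "vnorm (0\<^sub>v m) = 0"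
  unfolding vnorm_def by simp

lemma vnorm_pos:
  fixes h :: "complex vec"
  assumes "h \<in> carrier_vec m" "h \<noteq> 0\<^sub>v m"
  shows "vnorm h > 0"
proof (rule ccontr)
  assume "\<not> vnorm h > 0"
  then have "vnorm h = 0" using vnorm_nonneg[of h] by simp
  then have "(\<Sum>i<dim_vec h. (cmod (h $ i))\<^sup>2) = 0" unfolding vnorm_def by simp
  then have "\<forall>i \<in> {..<dim_vec h}. (cmod (h $ i))\<^sup>2 = 0"
    by (subst (asm) sum_nonneg_eq_0_iff) auto
  then have "h = 0\<^sub>v m" using assms(1) by (intro eq_vecI) auto
  then show False using assms(2) by simp
qed

lemma vnorm_add:
  fixes u v :: "complex vec"
  assumes "u \<in> carrier_vec m" "v \<in> carrier_vec m"
  shows "vnorm (u + v) \<le> vnorm u + vnorm v"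
proof -
  have "vnorm (u + v) = L2_set (\<lambda>i. cmod (u $ i + v $ i)) {..<m}"
    using assms unfolding vnorm_L2 by (auto intro!: L2_set_cong)
  also have "\<dots> \<le> L2_set (\<lambda>i. cmod (u $ i) + cmod (v $ i)) {..<m}"
    by (rule L2_set_mono) (auto intro: norm_triangle_ineq)
  also have "\<dots> \<le> L2_set (\<lambda>i. cmod (u $ i)) {..<m} + L2_set (\<lambda>i. cmod (v $ i)) {..<m}"
    by (rule L2_set_triangle_ineq)
  also have "\<dots> = vnorm u + vnorm v" using assms unfolding vnorm_L2 by simp
  finally show ?thesis .
qed

lemma vnorm_smult: "vnorm (c \<cdot>\<^sub>v v) = cmod c * vnorm (v :: complex vec)"
  unfolding vnorm_L2 by (simp add: L2_set_right_distrib) (rule L2_set_cong, auto simp: norm_mult)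

lemma inner_adj:
  fixes x y :: "complex vec"
  assumes A: "A \<in> carrier_mat a b" and x: "x \<in> carrier_vec b" and y: "y \<in> carrier_vec a"
  shows "(\<Sum>i<a. cnj ((A *\<^sub>v x) $ i) * y $ i) = (\<Sum>k<b. cnj (x $ k) * (adj A *\<^sub>v y) $ k)"
proof -
  have "(\<Sum>i<a. cnj ((A *\<^sub>v x) $ i) * y $ i) = (\<Sum>i<a. \<Sum>k<b. cnj (A $$ (i,k)) * cnj (x $ k) * y $ i)"
    using A x y by (simp add: scalar_prod_def sum_distrib_right lessThan_atLeast0)
  also have "\<dots> = (\<Sum>k<b. \<Sum>i<a. cnj (A $$ (i,k)) * cnj (x $ k) * y $ i)"
    by (rule sum.swap)
  also have "\<dots> = (\<Sum>k<b. cnj (x $ k) * (adj A *\<^sub>v y) $ k)"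
    using A x y
    by (auto simp: scalar_prod_def sum_distrib_left lessThan_atLeast0 algebra_simps intro!: sum.cong)
  finally show ?thesis .
qed

lemma unitary_vnorm:
  fixes x :: "complex vec"
  assumes A: "A \<in> carrier_mat m m" and u: "adj A * A = 1\<^sub>m m" and x: "x \<in> carrier_vec m"
  shows "vnorm (A *\<^sub>v x) = vnorm x"
proof -
  have "(\<Sum>i<m. cnj ((A *\<^sub>v x) $ i) * (A *\<^sub>v x) $ i) = (\<Sum>k<m. cnj (x $ k) * (adj A *\<^sub>v (A *\<^sub>v x)) $ k)"
    using A x by (intro inner_adj) auto
  also have "adj A *\<^sub>v (A *\<^sub>v x) = x"
    using A x u by (simp add: assoc_mult_mat_vec[symmetric, of _ m m _ m])
  finally have "complex_of_real ((vnorm (A *\<^sub>v x))\<^sup>2) = complex_of_real ((vnorm x)\<^sup>2)"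
    using A x unfolding vnorm_sq by simp
  then have "(vnorm (A *\<^sub>v x))\<^sup>2 = (vnorm x)\<^sup>2" by (metis of_real_eq_iff)
  then show ?thesis using vnorm_nonneg[of x] vnorm_nonneg[of "A *\<^sub>v x"]
    by (simp add: power2_eq_iff_nonneg)
qed

lemma opnorm_le:
  assumes "A \<in> carrier_mat m m" "b \<ge> 0"
    and "\<And>x. x \<in> carrier_vec m \<Longrightarrow> vnorm (A *\<^sub>v x) \<le> b * vnorm x"
  shows "opnorm A \<le> b"
  unfolding opnorm_def
proof (rule cSup_least)
  show "{vnorm (A *\<^sub>v x) |x. x \<in> carrier_vec (dim_col A) \<and> vnorm x \<le> 1} \<noteq> {}"
    using assms(1) by (auto intro!: exI[of _ "0\<^sub>v m"])
  fix y assume "y \<in> {vnorm (A *\<^sub>v x) |x. x \<in> carrier_vec (dim_col A) \<and> vnorm x \<le> 1}"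
  then obtain x where x: "x \<in> carrier_vec m" "vnorm x \<le> 1" and y: "y = vnorm (A *\<^sub>v x)"
    using assms(1) by auto
  have "y \<le> b * vnorm x" using assms(3)[OF x(1)] y by simp
  also have "\<dots> \<le> b" using x(2) assms(2) by (simp add: mult_left_le)
  finally show "y \<le> b" .
qed

section \<open>Cavities and cascades\<close>

definition outer :: "nat \<Rightarrow> complex vec \<Rightarrow> complex mat" where
  "outer m h = mat m m (\<lambda>(a,b). h $ a * cnj (h $ b))"

lemma outer_carrier[simp]: "outer m h \<in> carrier_mat m m"
  unfolding outer_def by simp

lemma cavity_carrier[simp]: "cavity m p h s \<in> carrier_mat m m"
  unfolding cavity_def by auto

lemma cavity_dim[simp]: "dim_row (cavity m p h s) = m" "dim_col (cavity m p h s) = m"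
  unfolding cavity_def by auto

lemma cavity_index:
  "k < m \<Longrightarrow> j < m \<Longrightarrow>
   cavity m p h s $$ (k,j) = (if k = j then 1 else 0) + (1 / (p - s)) * (h $ k * cnj (h $ j))"
  unfolding cavity_def by simp

lemma mprod_carrier: "set As \<subseteq> carrier_mat m m \<Longrightarrow> mprod m As \<in> carrier_mat m m"
  unfolding mprod_def by (induction As) auto

lemma cprod_carrier[simp]: "cprod m p H lo hi s \<in> carrier_mat m m"
  unfolding cprod_def by (rule mprod_carrier) auto

lemma cprod_empty: "hi < lo \<Longrightarrow> cprod m p H lo hi s = 1\<^sub>m m"
  unfolding cprod_def mprod_def by simp

lemma cprod_Suc:
  "lo \<le> Suc hi \<Longrightarrow>
   cprod m p H lo (Suc hi) s = cavity m (p (Suc hi)) (H (Suc hi)) s * cprod m p H lo hi s"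
  unfolding cprod_def mprod_def by simp

lemma cprod_split:
  assumes "lo \<le> Suc k" "k \<le> hi"
  shows "cprod m p H lo hi s = cprod m p H (Suc k) hi s * cprod m p H lo k s"
  using assms(2)
proof (induction hi rule: dec_induct)
  case base
  then show ?case by (simp add: cprod_empty left_mult_one_mat[of _ m m])
next
  case (step n)
  have "cprod m p H lo (Suc n) s = cavity m (p (Suc n)) (H (Suc n)) s * cprod m p H lo n s"
    using assms step by (intro cprod_Suc) auto
  also have "\<dots> = (cavity m (p (Suc n)) (H (Suc n)) s * cprod m p H (Suc k) n s) * cprod m p H lo k s"
    using step by (simp add: assoc_mult_mat[of _ m m _ m _ m])
  also have "cavity m (p (Suc n)) (H (Suc n)) s * cprod m p H (Suc k) n s = cprod m p H (Suc k) (Suc n) s"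
    using step by (intro cprod_Suc[symmetric]) auto
  finally show ?case .
qed

definition cavity_data :: "nat \<Rightarrow> (nat \<Rightarrow> complex) \<Rightarrow> (nat \<Rightarrow> complex vec) \<Rightarrow> nat set \<Rightarrow> bool" where
  "cavity_data m p H A \<longleftrightarrow>
     (\<forall>i \<in> A. H i \<in> carrier_vec m \<and> (\<Sum>a<m. cnj (H i $ a) * H i $ a) = - (p i + cnj (p i)))"

lemma cavity_data_subset: "cavity_data m p H B \<Longrightarrow> A \<subseteq> B \<Longrightarrow> cavity_data m p H A"
  unfolding cavity_data_def by blast

lemma cavity_data_vnorm:
  assumes "cavity_data m p H A" "i \<in> A"
  shows "(vnorm (H i))\<^sup>2 = - Re (p i + cnj (p i))"
proof -
  have "complex_of_real ((vnorm (H i))\<^sup>2) = - (p i + cnj (p i))"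
    using assms vnorm_sq[of "H i"] unfolding cavity_data_def by auto
  then show ?thesis by (metis Re_complex_of_real uminus_complex.sel(1))
qed

lemma cavity_pole_stable:
  assumes "cavity_data m p H A" "i \<in> A" "H i \<noteq> 0\<^sub>v m"
  shows "Re (p i) < 0"
proof -
  have "(vnorm (H i))\<^sup>2 > 0"
    using vnorm_pos[of "H i" m] assms unfolding cavity_data_def by auto
  then show ?thesis using cavity_data_vnorm[OF assms(1,2)] by simp
qed

lemma delta_sum:
  fixes i j m :: nat
  assumes "i < m" "j < m"
  shows "(\<Sum>k<m. ((if k = i then 1 else 0) + a k) * ((if k = j then 1 else 0) + b k)) =
    (if i = j then 1 else (0::complex)) + b i + a j + (\<Sum>k<m. a k * b k)"
proof -
  have e: "\<And>k. ((if k = i then 1 else 0) + a k) * ((if k = j then 1 else 0) + b k) =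
      (if k = i then (if i = j then 1 else 0) else 0) + (if k = i then b k else 0)
       + (if k = j then a k else 0) + a k * b k"
    by (auto simp: algebra_simps)
  show ?thesis unfolding e sum.distrib using assms by simp
qed

lemma cavity_unitary:
  fixes h :: "complex vec"
  assumes h: "h \<in> carrier_vec m" and c: "(p - s) + cnj (p - s) = - (\<Sum>a<m. cnj (h $ a) * h $ a)"
  shows "adj (cavity m p h s) * cavity m p h s = 1\<^sub>m m"
proof (rule eq_matI)
  fix i j assume i: "i < dim_row (1\<^sub>m m)" and j: "j < dim_col (1\<^sub>m m :: complex mat)"
  define c where "c = 1 / (p - s)"
  define S where "S = (\<Sum>a<m. cnj (h $ a) * h $ a)"
  have cc: "c + cnj c + cnj c * c * S = 0"
  proof (cases "p - s = 0")
    case True then show ?thesis by (simp add: c_def)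
  next
    case False
    define d where "d = p - s"
    have d0: "d \<noteq> 0" "cnj d \<noteq> 0" using False by (auto simp: d_def)
    have dS: "d + cnj d = - S" using c unfolding d_def S_def .
    have "c + cnj c + cnj c * c * S = (cnj d + d + S) / (d * cnj d)"
      unfolding c_def d_def[symmetric] using d0 by (simp add: field_simps complex_cnj_divide)
    also have "\<dots> = 0" using dS by (simp add: add.commute)
    finally show ?thesis .
  qed
  have "(adj (cavity m p h s) * cavity m p h s) $$ (i, j) =
     (\<Sum>k<m. ((if k = i then 1 else 0) + cnj c * (cnj (h $ k) * h $ i)) *
               ((if k = j then 1 else 0) + c * (h $ k * cnj (h $ j))))"
    using i j
    by (auto simp: scalar_prod_def cavity_index c_def lessThan_atLeast0 cavity_def intro!: sum.cong)
  also have "\<dots> = (if i = j then 1 else 0) + c * (h $ i * cnj (h $ j)) + cnj c * (cnj (h $ j) * h $ i)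
      + (\<Sum>k<m. cnj c * (cnj (h $ k) * h $ i) * (c * (h $ k * cnj (h $ j))))"
    by (rule delta_sum) (use i j in auto)
  also have "(\<Sum>k<m. cnj c * (cnj (h $ k) * h $ i) * (c * (h $ k * cnj (h $ j))))
     = cnj c * c * (h $ i * cnj (h $ j)) * S"
    unfolding S_def by (simp add: sum_distrib_left algebra_simps)
  also have "(if i = j then 1 else 0) + c * (h $ i * cnj (h $ j)) + cnj c * (cnj (h $ j) * h $ i) +
      cnj c * c * (h $ i * cnj (h $ j)) * S
      = (if i = j then 1 else 0) + (c + cnj c + cnj c * c * S) * (h $ i * cnj (h $ j))"
    by (simp add: algebra_simps)
  also have "\<dots> = 1\<^sub>m m $$ (i,j)" using i j cc by simp
  finally show "(adj (cavity m p h s) * cavity m p h s) $$ (i, j) = 1\<^sub>m m $$ (i,j)" .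
qed (auto simp: cavity_def)

lemma cprod_unitary:
  assumes "cavity_data m p H {lo..hi}" "1 \<le> lo" "s + cnj s = 0"
  shows "adj (cprod m p H lo hi s) * cprod m p H lo hi s = 1\<^sub>m m"
  using assms(1)
proof (induction hi)
  case 0
  then show ?case using assms by (simp add: cprod_empty)
next
  case (Suc hi)
  show ?case
  proof (cases "lo \<le> Suc hi")
    case True
    have data: "H (Suc hi) \<in> carrier_vec m"
      "(\<Sum>a<m. cnj (H (Suc hi) $ a) * H (Suc hi) $ a) = - (p (Suc hi) + cnj (p (Suc hi)))"
      using Suc.prems True unfolding cavity_data_def by auto
    have "p (Suc hi) - s + cnj (p (Suc hi) - s) = p (Suc hi) + cnj (p (Suc hi)) - (s + cnj s)"
      by simp
    then have c: "adj (cavity m (p (Suc hi)) (H (Suc hi)) s) * cavity m (p (Suc hi)) (H (Suc hi)) s = 1\<^sub>m m"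
      using assms(3) data by (intro cavity_unitary) auto
    have "cavity_data m p H {lo..hi}" using Suc.prems by (rule cavity_data_subset) auto
    then show ?thesis unfolding cprod_Suc[OF True]
      by (intro unitary_mult[OF _ _ c Suc.IH]) auto
  next
    case False
    then show ?thesis by (simp add: cprod_empty)
  qed
qed

section \<open>The error estimate\<close>

lemma smult_mat_vec:
  fixes A :: "complex mat"
  assumes "A \<in> carrier_mat a b" "v \<in> carrier_vec b"
  shows "(k \<cdot>\<^sub>m A) *\<^sub>v v = k \<cdot>\<^sub>v (A *\<^sub>v v)"
  by (rule eq_vecI) (use assms in \<open>auto simp: scalar_prod_def sum_distrib_left algebra_simps\<close>)

text \<open>The rank-one matrix h h^dagger has norm |h|^2 (Cauchy-Schwarz).\<close>
lemma outer_bound: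
  fixes h y :: "complex vec"
  assumes h: "h \<in> carrier_vec m" and y: "y \<in> carrier_vec m"
  shows "vnorm (outer m h *\<^sub>v y) \<le> (vnorm h)\<^sup>2 * vnorm y"
proof -
  define t where "t = (\<Sum>b<m. cnj (h $ b) * y $ b)"
  have eq: "outer m h *\<^sub>v y = t \<cdot>\<^sub>v h"
    by (rule eq_vecI)
      (use h y in \<open>auto simp: outer_def scalar_prod_def t_def sum_distrib_left lessThan_atLeast0 algebra_simps\<close>)
  have "cmod t \<le> (\<Sum>b<m. \<bar>cmod (h $ b)\<bar> * \<bar>cmod (y $ b)\<bar>)"
    unfolding t_def by (rule order.trans[OF norm_sum]) (simp add: norm_mult)
  also have "\<dots> \<le> L2_set (\<lambda>b. cmod (h $ b)) {..<m} * L2_set (\<lambda>b. cmod (y $ b)) {..<m}"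
    by (rule L2_set_mult_ineq)
  also have "\<dots> = vnorm h * vnorm y" using h y unfolding vnorm_L2 by simp
  finally have t: "cmod t \<le> vnorm h * vnorm y" .
  have "vnorm (outer m h *\<^sub>v y) = cmod t * vnorm h" unfolding eq vnorm_smult ..
  also have "\<dots> \<le> vnorm h * vnorm y * vnorm h"
    by (rule mult_right_mono[OF t vnorm_nonneg])
  finally show ?thesis by (simp add: power2_eq_square algebra_simps)
qed

lemma cavity_increment_bound:
  fixes h y :: "complex vec"
  assumes h: "h \<in> carrier_vec m" and y: "y \<in> carrier_vec m"
  shows "vnorm ((cavity m q h s - cavity m q h 0) *\<^sub>v y) \<le> cmod (1 / (q - s) - 1 / q) * (vnorm h)\<^sup>2 * vnorm y"
proof -
  have "cavity m q h s - cavity m q h 0 = (1 / (q - s) - 1 / q) \<cdot>\<^sub>m outer m h"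
    by (rule eq_matI) (auto simp: cavity_def outer_def algebra_simps)
  then have "vnorm ((cavity m q h s - cavity m q h 0) *\<^sub>v y) = cmod (1 / (q - s) - 1 / q) * vnorm (outer m h *\<^sub>v y)"
    using y by (simp add: smult_mat_vec[of _ m m] vnorm_smult)
  also have "\<dots> \<le> cmod (1 / (q - s) - 1 / q) * ((vnorm h)\<^sup>2 * vnorm y)"
    by (rule mult_left_mono[OF outer_bound[OF h y]]) simp
  finally show ?thesis by (simp add: mult.assoc)
qed

text \<open>One telescoping step: A B - C D = (A - C) B + C (B - D), and C is isometric.\<close>
lemma vnorm_product_difference:
  fixes A B C D :: "complex mat"
  assumes car: "A \<in> carrier_mat m m" "B \<in> carrier_mat m m" "C \<in> carrier_mat m m" "D \<in> carrier_mat m m"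
    and C: "adj C * C = 1\<^sub>m m" and y: "y \<in> carrier_vec m"
  shows "vnorm ((A * B - C * D) *\<^sub>v y) \<le> vnorm ((A - C) *\<^sub>v (B *\<^sub>v y)) + vnorm ((B - D) *\<^sub>v y)"
proof -
  have split: "(A * B - C * D) *\<^sub>v y = (A - C) *\<^sub>v (B *\<^sub>v y) + C *\<^sub>v ((B - D) *\<^sub>v y)"
    using car y by (intro eq_vecI)
      (auto simp: minus_mult_distrib_mat_vec[of _ m m] assoc_mult_mat_vec[of _ m m _ m]
        mult_minus_distrib_mat_vec[of _ m m])
  have "vnorm ((A * B - C * D) *\<^sub>v y) \<le> vnorm ((A - C) *\<^sub>v (B *\<^sub>v y)) + vnorm (C *\<^sub>v ((B - D) *\<^sub>v y))"
    unfolding split using car y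
    by (intro vnorm_add[of _ m]) (auto intro!: mult_mat_vec_carrier[of _ m m] simp: minus_carrier_mat)
  also have "vnorm (C *\<^sub>v ((B - D) *\<^sub>v y)) = vnorm ((B - D) *\<^sub>v y)"
    using car y
    by (intro unitary_vnorm[OF car(3) C]) (auto intro!: mult_mat_vec_carrier[of _ m m] simp: minus_carrier_mat)
  finally show ?thesis .
qed

lemma cprod_increment_bound:
  fixes y :: "complex vec"
  assumes "cavity_data m p H {lo..hi}" "1 \<le> lo" "s + cnj s = 0" "y \<in> carrier_vec m"
  shows "vnorm ((cprod m p H lo hi s - cprod m p H lo hi 0) *\<^sub>v y)
     \<le> (\<Sum>i=lo..hi. cmod (1 / (p i - s) - 1 / p i) * (vnorm (H i))\<^sup>2) * vnorm y"
  using assms(1)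
proof (induction hi)
  case 0
  have "(1\<^sub>m m - 1\<^sub>m m) *\<^sub>v y = 0\<^sub>v m" using assms(4) by (intro eq_vecI) (auto simp: scalar_prod_def)
  then show ?case using assms by (simp add: cprod_empty)
next
  case (Suc hi)
  show ?case
  proof (cases "lo \<le> Suc hi")
    case False
    have "(1\<^sub>m m - 1\<^sub>m m) *\<^sub>v y = 0\<^sub>v m" using assms(4) by (intro eq_vecI) (auto simp: scalar_prod_def)
    then show ?thesis using False by (simp add: cprod_empty)
  next
    case True
    define Cs where "Cs = cavity m (p (Suc hi)) (H (Suc hi)) s"
    define C0 where "C0 = cavity m (p (Suc hi)) (H (Suc hi)) 0"
    define Qs where "Qs = cprod m p H lo hi s"
    define Q0 where "Q0 = cprod m p H lo hi 0"
    define \<delta> where "\<delta> = cmod (1 / (p (Suc hi) - s) - 1 / p (Suc hi)) * (vnorm (H (Suc hi)))\<^sup>2"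
    have data: "cavity_data m p H {lo..hi}" using Suc.prems by (rule cavity_data_subset) auto
    have hS: "H (Suc hi) \<in> carrier_vec m"
      and eS: "(\<Sum>a<m. cnj (H (Suc hi) $ a) * H (Suc hi) $ a) = - (p (Suc hi) + cnj (p (Suc hi)))"
      using Suc.prems True unfolding cavity_data_def by auto
    have unitary: "adj C0 * C0 = 1\<^sub>m m" "adj Qs * Qs = 1\<^sub>m m"
      unfolding C0_def Qs_def using eS by (auto intro: cavity_unitary[OF hS] cprod_unitary[OF data assms(2,3)])
    have "vnorm ((Cs * Qs - C0 * Q0) *\<^sub>v y) \<le> vnorm ((Cs - C0) *\<^sub>v (Qs *\<^sub>v y)) + vnorm ((Qs - Q0) *\<^sub>v y)"
      unfolding Cs_def C0_def Qs_def Q0_def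
      by (rule vnorm_product_difference[OF _ _ _ _ unitary(1)[unfolded C0_def] assms(4)]) auto
    also have "vnorm ((Cs - C0) *\<^sub>v (Qs *\<^sub>v y)) \<le> \<delta> * vnorm (Qs *\<^sub>v y)"
      unfolding Cs_def C0_def \<delta>_def Qs_def using assms(4) by (intro cavity_increment_bound[OF hS]) (auto intro: mult_mat_vec_carrier[OF cprod_carrier])
    also have "vnorm (Qs *\<^sub>v y) = vnorm y"
      unfolding Qs_def by (rule unitary_vnorm[OF _ unitary(2)[unfolded Qs_def] assms(4)]) auto
    also have "vnorm ((Qs - Q0) *\<^sub>v y) \<le> (\<Sum>i=lo..hi. cmod (1 / (p i - s) - 1 / p i) * (vnorm (H i))\<^sup>2) * vnorm y"
      unfolding Qs_def Q0_def by (rule Suc.IH[OF data])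
    finally show ?thesis
      unfolding cprod_Suc[OF True] Cs_def[symmetric] C0_def[symmetric] Qs_def[symmetric] Q0_def[symmetric]
      using True by (simp add: sum.atLeast_Suc_atMost \<delta>_def algebra_simps)
  qed
qed

text \<open>The change of the i-th cavity on the imaginary axis is exactly  w C_{i}(w).\<close>
lemma cavity_increment_norm:
  assumes "Re q < 0" "\<omega> \<ge> 0"
  shows "cmod (1 / (q - \<i> * complex_of_real \<omega>) - 1 / q) * (- Re (q + cnj q)) =
     \<omega> * (- Re (q + cnj q) / (cmod q * cmod (q - \<i> * complex_of_real \<omega>)))"
proof -
  have q0: "q \<noteq> 0" using assms(1) by auto
  have qs: "q - \<i> * complex_of_real \<omega> \<noteq> 0"
  proof
    assume "q - \<i> * complex_of_real \<omega> = 0"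
    then have "Re (q - \<i> * complex_of_real \<omega>) = 0" by simp
    then show False using assms(1) by simp
  qed
  have "1 / (q - \<i> * complex_of_real \<omega>) - 1 / q = (\<i> * complex_of_real \<omega>) / ((q - \<i> * complex_of_real \<omega>) * q)"
    using q0 qs by (simp add: field_simps)
  then have "cmod (1 / (q - \<i> * complex_of_real \<omega>) - 1 / q) = \<omega> / (cmod (q - \<i> * complex_of_real \<omega>) * cmod q)"
    using assms(2) by (simp add: norm_divide norm_mult)
  then show ?thesis by (simp add: field_simps)
qed

lemma esym_zero_singleton: "esym 0 p {i} = 1"
proof -
  have "{T. T \<subseteq> {i} \<and> card T = 0} = {{}}"
    by (auto dest: finite_subset)
  then show ?thesis unfolding esym_def by simp
qed

lemma Bterm_one:
  assumes data: "cavity_data m p H {1..n}" and stable: "\<forall>i\<in>{1..n}. Re (p i) < 0" and w: "\<omega> \<ge> 0"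
  shows "Bterm r n p 1 \<omega> = (\<Sum>i=r+1..n. cmod (1 / (p i - \<i> * complex_of_real \<omega>) - 1 / p i) * (vnorm (H i))\<^sup>2)"
proof -
  have singletons: "{I. I \<subseteq> {r+1..n} \<and> card I = 1} = (\<lambda>i. {i}) ` {r+1..n}"
    by (auto simp: card_1_singleton_iff)
  have "Bterm r n p 1 \<omega> = (\<Sum>i\<in>{r+1..n}. \<omega> * Cterm p {i} \<omega>)"
    unfolding Bterm_def singletons by (subst sum.reindex) (auto intro: inj_onI simp: sum_distrib_left)
  also have "\<dots> = (\<Sum>i=r+1..n. cmod (1 / (p i - \<i> * complex_of_real \<omega>) - 1 / p i) * (vnorm (H i))\<^sup>2)"
  proof (rule sum.cong[OF refl])
    fix i assume "i \<in> {r+1..n}"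
    then have i: "i \<in> {1..n}" by auto
    show "\<omega> * Cterm p {i} \<omega> = cmod (1 / (p i - \<i> * complex_of_real \<omega>) - 1 / p i) * (vnorm (H i))\<^sup>2"
      unfolding Cterm_def cavity_data_vnorm[OF data i]
      using cavity_increment_norm[of "p i" \<omega>] stable i w by (simp add: esym_zero_singleton)
  qed
  finally show ?thesis .
qed

lemma Bterm_nonneg:
  assumes "cavity_data m p H {1..n}" "\<omega> \<ge> 0"
  shows "Bterm r n p k \<omega> \<ge> 0"
  unfolding Bterm_def
proof (intro mult_nonneg_nonneg[OF assms(2)] sum_nonneg)
  fix I assume "I \<in> {I. I \<subseteq> {r+1..n} \<and> card I = k}"
  then have I: "I \<subseteq> {1..n}" by auto
  have "- Re (p i + cnj (p i)) \<ge> 0" if "i \<in> I" for i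
    using cavity_data_vnorm[OF assms(1), of i] I that by (metis subsetD zero_le_power2)
  then show "Cterm p I \<omega> \<ge> 0" unfolding Cterm_def
    by (intro mult_nonneg_nonneg divide_nonneg_nonneg prod_nonneg) auto
qed

text \<open>The error of the approximation: on the imaginary axis its induced norm is at most
  B_1(w), hence at most the sum of all B_k(w).\<close>
lemma cascade_error_bound:
  fixes J :: "complex mat"
  assumes r: "1 \<le> r" "r < n" and J: "J \<in> carrier_mat m m" "adj J * J = 1\<^sub>m m"
    and data: "cavity_data m p H {1..n}" and stable: "\<forall>i\<in>{1..n}. Re (p i) < 0" and w: "\<omega> \<ge> 0"
  shows "opnorm (J * cprod m p H 1 n (\<i> * \<omega>) - J * cprod m p H (r+1) n 0 * cprod m p H 1 r (\<i> * \<omega>))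
     \<le> (\<Sum>k=1..n-r. Bterm r n p k \<omega>)"
proof -
  define s where "s = \<i> * complex_of_real \<omega>"
  have s: "s + cnj s = 0" unfolding s_def by simp
  define Qs where "Qs = cprod m p H (r+1) n s"
  define Q0 where "Q0 = cprod m p H (r+1) n 0"
  define Ps where "Ps = cprod m p H 1 r s"
  define \<beta> where "\<beta> = (\<Sum>i=r+1..n. cmod (1 / (p i - s) - 1 / p i) * (vnorm (H i))\<^sup>2)"
  have car: "Qs \<in> carrier_mat m m" "Q0 \<in> carrier_mat m m" "Ps \<in> carrier_mat m m"
    unfolding Qs_def Q0_def Ps_def by auto
  have Ps: "adj Ps * Ps = 1\<^sub>m m"
    unfolding Ps_def using data r by (intro cprod_unitary[OF _ _ s]) (auto elim: cavity_data_subset)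
  have "cprod m p H 1 n s = Qs * Ps"
    unfolding Qs_def Ps_def using cprod_split[of 1 r n m p H s] r by simp
  then have error: "J * cprod m p H 1 n s - J * Q0 * Ps = J * ((Qs - Q0) * Ps)"
    using J car by (simp add: minus_mult_distrib_mat[of _ m m] mult_minus_distrib_mat[of J m m _ m])
  have "opnorm (J * ((Qs - Q0) * Ps)) \<le> \<beta>"
  proof (rule opnorm_le)
    show "J * ((Qs - Q0) * Ps) \<in> carrier_mat m m" using J car by auto
    show "\<beta> \<ge> 0" unfolding \<beta>_def by (intro sum_nonneg mult_nonneg_nonneg) auto
    fix x :: "complex vec" assume x: "x \<in> carrier_vec m"
    have diff: "Qs - Q0 \<in> carrier_mat m m" using car by (simp add: minus_carrier_mat)
    have "(J * ((Qs - Q0) * Ps)) *\<^sub>v x = J *\<^sub>v ((Qs - Q0) *\<^sub>v (Ps *\<^sub>v x))"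
      using assoc_mult_mat_vec[OF J(1) mult_carrier_mat[OF diff car(3)] x]
        assoc_mult_mat_vec[OF diff car(3) x] by simp
    then have "vnorm ((J * ((Qs - Q0) * Ps)) *\<^sub>v x) = vnorm (J *\<^sub>v ((Qs - Q0) *\<^sub>v (Ps *\<^sub>v x)))"
      by simp
    also have "\<dots> = vnorm ((Qs - Q0) *\<^sub>v (Ps *\<^sub>v x))"
      using diff car x by (intro unitary_vnorm[OF J]) (auto intro!: mult_mat_vec_carrier[of _ m m])
    also have "\<dots> \<le> \<beta> * vnorm (Ps *\<^sub>v x)" unfolding Qs_def Q0_def \<beta>_def
      using data r x car by (intro cprod_increment_bound[OF _ _ s]) (auto elim: cavity_data_subset)
    also have "vnorm (Ps *\<^sub>v x) = vnorm x" by (rule unitary_vnorm[OF car(3) Ps x])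
    finally show "vnorm ((J * ((Qs - Q0) * Ps)) *\<^sub>v x) \<le> \<beta> * vnorm x" .
  qed
  also have "\<beta> = Bterm r n p 1 \<omega>" unfolding \<beta>_def s_def by (rule Bterm_one[OF data stable w, symmetric])
  also have "\<dots> \<le> (\<Sum>k=1..n-r. Bterm r n p k \<omega>)"
    by (rule member_le_sum) (use r Bterm_nonneg[OF data w] in auto)
  finally show ?thesis using error unfolding Q0_def Ps_def s_def by simp
qed

section \<open>A physically realizable state space realization of the cascade\<close>

definition cascade_L :: "nat \<Rightarrow> nat \<Rightarrow> (nat \<Rightarrow> complex vec) \<Rightarrow> complex mat" where
  "cascade_L m r H = mat m r (\<lambda>(a,j). H (Suc j) $ a)"

definition cascade_gram :: "nat \<Rightarrow> nat \<Rightarrow> (nat \<Rightarrow> complex vec) \<Rightarrow> complex mat" where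
  "cascade_gram m r H = mat r r (\<lambda>(i,j). \<Sum>a<m. cnj (H (Suc i) $ a) * H (Suc j) $ a)"

definition cascade_F :: "nat \<Rightarrow> nat \<Rightarrow> (nat \<Rightarrow> complex) \<Rightarrow> (nat \<Rightarrow> complex vec) \<Rightarrow> complex mat" where
  "cascade_F m r p H = mat r r (\<lambda>(i,j).
     if i = j then p (Suc i) else if j < i then - cascade_gram m r H $$ (i,j) else 0)"

lemma cascade_L_carrier[simp]: "cascade_L m r H \<in> carrier_mat m r"
  unfolding cascade_L_def by simp

lemma cascade_gram_carrier[simp]: "cascade_gram m r H \<in> carrier_mat r r"
  unfolding cascade_gram_def by simp

lemma cascade_F_carrier[simp]: "cascade_F m r p H \<in> carrier_mat r r"
  unfolding cascade_F_def by simp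

lemma cascade_dims[simp]:
  "dim_row (cascade_L m r H) = m" "dim_col (cascade_L m r H) = r"
  "dim_row (cascade_gram m r H) = r" "dim_col (cascade_gram m r H) = r"
  "dim_row (cascade_F m r p H) = r" "dim_col (cascade_F m r p H) = r"
  unfolding cascade_L_def cascade_gram_def cascade_F_def by auto

lemma cascade_gram_eq: "adj (cascade_L m r H) * cascade_L m r H = cascade_gram m r H"
  by (rule eq_matI) (auto simp: cascade_L_def cascade_gram_def scalar_prod_def lessThan_atLeast0)

lemma cascade_gram_cnj:
  "i < r \<Longrightarrow> j < r \<Longrightarrow> cnj (cascade_gram m r H $$ (j,i)) = cascade_gram m r H $$ (i,j)"
  unfolding cascade_gram_def by (simp add: mult.commute)

text \<open>The dissipation identity  F + F^dagger = - L^dagger L,  entrywise.\<close>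
lemma cascade_F_dissipation:
  assumes "cavity_data m p H {1..r}" "i < r" "j < r"
  shows "cascade_F m r p H $$ (i,j) + cnj (cascade_F m r p H $$ (j,i)) = - cascade_gram m r H $$ (i,j)"
proof -
  consider "i = j" | "j < i" | "i < j" by linarith
  then show ?thesis
  proof cases
    case 1
    have "(\<Sum>a<m. cnj (H (Suc i) $ a) * H (Suc i) $ a) = - (p (Suc i) + cnj (p (Suc i)))"
      using assms unfolding cavity_data_def by auto
    then show ?thesis using 1 assms unfolding cascade_F_def cascade_gram_def by simp
  next
    case 2
    then show ?thesis using assms unfolding cascade_F_def by simp
  next
    case 3
    then show ?thesis using assms cascade_gram_cnj[of i r j m H] unfolding cascade_F_def by simp
  qed
qed

lemma pos_def_one: "pos_def (1\<^sub>m r)"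
  unfolding pos_def_def hermitian_def
proof (intro conjI ballI impI)
  fix x :: "complex vec"
  assume "x \<in> carrier_vec (dim_col (1\<^sub>m r :: complex mat))" "x \<noteq> 0\<^sub>v (dim_col (1\<^sub>m r :: complex mat))"
  then have x: "x \<in> carrier_vec r" "x \<noteq> 0\<^sub>v r" by auto
  have "(\<Sum>a<dim_col (1\<^sub>m r). cnj (x $ a) * (1\<^sub>m r *\<^sub>v x) $ a) = complex_of_real ((vnorm x)\<^sup>2)"
    using x vnorm_sq[of x] by simp
  then show "0 < Re (\<Sum>a<dim_col (1\<^sub>m r). cnj (x $ a) * (1\<^sub>m r *\<^sub>v x) $ a)"
    using vnorm_pos[OF x] by simp
qed (auto intro: eq_matI simp: adj_def)

text \<open>Physical realizability with  Theta = I,  Lambda = J_a L,  S = J_a  and the Hamiltonian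
  M = i (F + L^dagger L / 2),  which is hermitian by the dissipation identity.\<close>
lemma cascade_phys_realizable:
  fixes Ja :: "complex mat"
  assumes Ja: "Ja \<in> carrier_mat m m" "adj Ja * Ja = 1\<^sub>m m" and data: "cavity_data m p H {1..r}"
  shows "phys_realizable r m (cascade_F m r p H) (- adj (cascade_L m r H)) (Ja * cascade_L m r H) Ja"
proof -
  define F where "F = cascade_F m r p H"
  define g where "g = cascade_gram m r H"
  define \<Lambda> where "\<Lambda> = Ja * cascade_L m r H"
  define M where "M = mat r r (\<lambda>(i,j). \<i> * (F $$ (i,j) + 1/2 * g $$ (i,j)))"
  have \<Lambda>: "\<Lambda> \<in> carrier_mat m r" unfolding \<Lambda>_def using Ja by auto
  have \<Lambda>\<Lambda>: "adj \<Lambda> * \<Lambda> = g"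
    unfolding \<Lambda>_def g_def using unitary_left_cancel[OF Ja cascade_L_carrier cascade_L_carrier]
    by (simp add: cascade_gram_eq)
  have G: "adj \<Lambda> * Ja = adj (cascade_L m r H)"
    using unitary_left_cancel[OF Ja cascade_L_carrier one_carrier_mat] Ja
      right_mult_one_mat[OF adj_carrier[OF cascade_L_carrier]]
    unfolding \<Lambda>_def by simp
  have herm: "hermitian M" unfolding hermitian_def
  proof (rule eq_matI)
    fix i j assume "i < dim_row M" "j < dim_col M"
    then have ij: "i < r" "j < r" unfolding M_def by auto
    have "adj M $$ (i,j) = - \<i> * (cnj (F $$ (j,i)) + 1/2 * g $$ (i,j))"
      using ij cascade_gram_cnj[OF ij, of m H] unfolding M_def g_def by simp
    also have "cnj (F $$ (j,i)) = - g $$ (i,j) - F $$ (i,j)"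
      using cascade_F_dissipation[OF data ij] unfolding F_def g_def by (simp add: algebra_simps)
    finally show "adj M $$ (i,j) = M $$ (i,j)"
      using ij unfolding M_def by (simp add: algebra_simps)
  qed (auto simp: M_def)
  have F: "F = - (1\<^sub>m r * (\<i> \<cdot>\<^sub>m M + (1/2) \<cdot>\<^sub>m (adj \<Lambda> * \<Lambda>)))"
    unfolding \<Lambda>\<Lambda> by (rule eq_matI) (auto simp: M_def F_def g_def cascade_F_def algebra_simps)
  show ?thesis unfolding phys_realizable_def
    by (rule exI[of _ "1\<^sub>m r"], rule exI[of _ \<Lambda>], rule exI[of _ M], rule exI[of _ Ja])
      (use Ja \<Lambda> herm pos_def_one F G in \<open>auto simp: M_def F_def \<Lambda>_def\<close>)
qed

text \<open>The eigenvalues of the triangular matrix F are the poles p_1, ..., p_r.\<close>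
lemma cascade_F_hurwitz:
  assumes "\<forall>i\<in>{1..r}. Re (p i) < 0"
  shows "hurwitz (cascade_F m r p H)"
  unfolding hurwitz_def
proof (intro allI impI)
  fix k assume "eigenvalue (cascade_F m r p H) k"
  then have d: "det (char_matrix (cascade_F m r p H) k) = 0"
    using eigenvalue_det[OF cascade_F_carrier] by blast
  have c: "char_matrix (cascade_F m r p H) k \<in> carrier_mat r r" by simp
  have "det (char_matrix (cascade_F m r p H) k) = prod_list (diag_mat (char_matrix (cascade_F m r p H) k))"
    by (rule det_lower_triangular[OF _ c]) (simp add: char_matrix_def cascade_F_def)
  with d have "0 \<in> set (diag_mat (char_matrix (cascade_F m r p H) k))"
    by (simp add: prod_list_zero_iff)
  then obtain i where i: "i < r" "char_matrix (cascade_F m r p H) k $$ (i,i) = 0"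
    unfolding diag_mat_def using c by auto
  then have "k = p (Suc i)" by (simp add: char_matrix_def cascade_F_def)
  then show "Re k < 0" using assms i(1) by auto
qed

text \<open>The candidate for  (sI - F)^{-1} G:  its i-th row is  H_{i+1}^dagger P_i(s) / (p_{i+1} - s),
  where  P_i(s) = K_i(s) ... K_1(s)  is a partial cascade.\<close>
definition cascade_X :: "nat \<Rightarrow> nat \<Rightarrow> (nat \<Rightarrow> complex) \<Rightarrow> (nat \<Rightarrow> complex vec) \<Rightarrow> complex \<Rightarrow> complex mat" where
  "cascade_X m r p H s = mat r m (\<lambda>(i,b).
     (\<Sum>l<m. cnj (H (Suc i) $ l) * cprod m p H 1 i s $$ (l,b)) / (p (Suc i) - s))"

lemma cascade_X_carrier[simp]: "cascade_X m r p H s \<in> carrier_mat r m"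
  unfolding cascade_X_def by simp

lemma cascade_X_dim[simp]: "dim_row (cascade_X m r p H s) = r" "dim_col (cascade_X m r p H s) = m"
  unfolding cascade_X_def by auto

lemma cavity_mult_index:
  fixes h :: "complex vec" and P :: "complex mat"
  assumes P: "P \<in> carrier_mat m m" and a: "a < m" and b: "b < m"
  shows "(cavity m q h s * P) $$ (a,b) = P $$ (a,b) + h $ a * ((\<Sum>l<m. cnj (h $ l) * P $$ (l,b)) / (q - s))"
proof -
  have "(cavity m q h s * P) $$ (a,b) = (\<Sum>l<m. cavity m q h s $$ (a,l) * P $$ (l,b))"
    using P a b by (simp add: scalar_prod_def lessThan_atLeast0)
  also have "\<dots> = (\<Sum>l<m. (if l = a then P $$ (l,b) else 0) + h $ a * (cnj (h $ l) * P $$ (l,b) / (q - s)))"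
    using a by (intro sum.cong) (auto simp: cavity_index algebra_simps)
  also have "\<dots> = P $$ (a,b) + h $ a * ((\<Sum>l<m. cnj (h $ l) * P $$ (l,b)) / (q - s))"
    using a by (simp add: sum.distrib sum_distrib_left sum_divide_distrib)
  finally show ?thesis .
qed

lemma cprod_partial_entry:
  assumes "k \<le> r" "a < m" "b < m"
  shows "cprod m p H 1 k s $$ (a,b) = (if a = b then 1 else 0) + (\<Sum>j<k. H (Suc j) $ a * cascade_X m r p H s $$ (j,b))"
  using assms(1)
proof (induction k)
  case 0
  then show ?case using assms by (simp add: cprod_empty)
next
  case (Suc k)
  have "cprod m p H 1 (Suc k) s $$ (a,b) = (cavity m (p (Suc k)) (H (Suc k)) s * cprod m p H 1 k s) $$ (a,b)"
    by (subst cprod_Suc) auto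
  also have "\<dots> = cprod m p H 1 k s $$ (a,b) + H (Suc k) $ a * cascade_X m r p H s $$ (k,b)"
    using Suc.prems assms by (subst cavity_mult_index) (auto simp: cascade_X_def)
  finally show ?case using Suc by simp
qed

lemma cascade_L_X: "cascade_L m r H * cascade_X m r p H s = cprod m p H 1 r s - 1\<^sub>m m"
proof (rule eq_matI)
  fix a b assume "a < dim_row (cprod m p H 1 r s - 1\<^sub>m m)" "b < dim_col (cprod m p H 1 r s - 1\<^sub>m m)"
  then have ab: "a < m" "b < m" by auto
  show "(cascade_L m r H * cascade_X m r p H s) $$ (a,b) = (cprod m p H 1 r s - 1\<^sub>m m) $$ (a,b)"
    using ab cprod_partial_entry[of r r a m b p H s]
    by (simp add: cascade_L_def scalar_prod_def lessThan_atLeast0)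
qed (auto simp: cascade_L_def)

text \<open>The strictly lower triangular part of row i of  sI - F  applied to X.\<close>
lemma cascade_gram_X:
  assumes i: "i < r" and b: "b < m"
  shows "(\<Sum>j<i. cascade_gram m r H $$ (i,j) * cascade_X m r p H s $$ (j,b))
    = (\<Sum>a<m. cnj (H (Suc i) $ a) * cprod m p H 1 i s $$ (a,b)) - cnj (H (Suc i) $ b)"
proof -
  define P where "P = cprod m p H 1 i s"
  have "(\<Sum>j<i. cascade_gram m r H $$ (i,j) * cascade_X m r p H s $$ (j,b))
      = (\<Sum>j<i. \<Sum>a<m. cnj (H (Suc i) $ a) * (H (Suc j) $ a * cascade_X m r p H s $$ (j,b)))"
    using i by (intro sum.cong) (auto simp: cascade_gram_def sum_distrib_right sum_distrib_left algebra_simps)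
  also have "\<dots> = (\<Sum>a<m. cnj (H (Suc i) $ a) * (\<Sum>j<i. H (Suc j) $ a * cascade_X m r p H s $$ (j,b)))"
    by (subst sum.swap) (simp add: sum_distrib_left)
  also have "\<dots> = (\<Sum>a<m. cnj (H (Suc i) $ a) * P $$ (a,b) - (if a = b then cnj (H (Suc i) $ b) else 0))"
    using i b cprod_partial_entry[of i r _ m b p H s] unfolding P_def
    by (intro sum.cong) (auto simp: algebra_simps)
  also have "\<dots> = (\<Sum>a<m. cnj (H (Suc i) $ a) * P $$ (a,b)) - cnj (H (Suc i) $ b)"
    using b by (simp add: sum_subtractf)
  finally show ?thesis unfolding P_def .
qed

lemma cascade_resolvent_X:
  assumes s: "s \<notin> p ` {1..r}"
  shows "(s \<cdot>\<^sub>m 1\<^sub>m r - cascade_F m r p H) * cascade_X m r p H s = - adj (cascade_L m r H)"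
proof (rule eq_matI)
  fix i b assume "i < dim_row (- adj (cascade_L m r H))" "b < dim_col (- adj (cascade_L m r H))"
  then have i: "i < r" and b: "b < m" by (auto simp: cascade_L_def)
  define X where "X = cascade_X m r p H s"
  define g where "g = cascade_gram m r H"
  define y where "y = (\<Sum>l<m. cnj (H (Suc i) $ l) * cprod m p H 1 i s $$ (l,b))"
  have ps: "p (Suc i) - s \<noteq> 0" using s i by force
  have row: "\<And>j. j < r \<Longrightarrow> (s \<cdot>\<^sub>m 1\<^sub>m r - cascade_F m r p H) $$ (i,j) * X $$ (j,b) =
      (if j = i then (s - p (Suc i)) * X $$ (j,b) else 0) + (if j < i then g $$ (i,j) * X $$ (j,b) else 0)"
    using i unfolding g_def by (auto simp: cascade_F_def)
  have "((s \<cdot>\<^sub>m 1\<^sub>m r - cascade_F m r p H) * X) $$ (i,b)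
      = (\<Sum>j<r. (s \<cdot>\<^sub>m 1\<^sub>m r - cascade_F m r p H) $$ (i,j) * X $$ (j,b))"
    using i b unfolding X_def by (simp add: scalar_prod_def lessThan_atLeast0)
  also have "\<dots> = (\<Sum>j<r. (if j = i then (s - p (Suc i)) * X $$ (j,b) else 0)
      + (if j < i then g $$ (i,j) * X $$ (j,b) else 0))"
    by (rule sum.cong[OF refl], rule row) simp
  also have "\<dots> = (s - p (Suc i)) * X $$ (i,b) + (\<Sum>j<r. if j < i then g $$ (i,j) * X $$ (j,b) else 0)"
    using i by (simp add: sum.distrib)
  also have "(\<Sum>j<r. if j < i then g $$ (i,j) * X $$ (j,b) else 0) = (\<Sum>j\<in>{j \<in> {..<r}. j < i}. g $$ (i,j) * X $$ (j,b))"
    by (rule sum.inter_filter[symmetric]) simp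
  also have "\<dots> = (\<Sum>j<i. g $$ (i,j) * X $$ (j,b))"
    using i by (intro sum.cong) auto
  also have "\<dots> = y - cnj (H (Suc i) $ b)"
    unfolding g_def X_def y_def by (rule cascade_gram_X[OF i b])
  also have "(s - p (Suc i)) * X $$ (i,b) = - y"
    using i b ps unfolding X_def y_def cascade_X_def by (simp add: field_simps)
  finally show "((s \<cdot>\<^sub>m 1\<^sub>m r - cascade_F m r p H) * cascade_X m r p H s) $$ (i,b) = (- adj (cascade_L m r H)) $$ (i,b)"
    using i b unfolding X_def by (simp add: cascade_L_def)
qed (auto simp: cascade_L_def)

lemma cascade_transfer:
  fixes Ja :: "complex mat"
  assumes Ja: "Ja \<in> carrier_mat m m"
    and s: "s \<notin> p ` {1..r}" and d: "det (s \<cdot>\<^sub>m 1\<^sub>m r - cascade_F m r p H) \<noteq> 0"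
  shows "Ja * cprod m p H 1 r s
    = Ja * cascade_L m r H * minv (s \<cdot>\<^sub>m 1\<^sub>m r - cascade_F m r p H) * (- adj (cascade_L m r H)) + Ja"
proof -
  define A where "A = s \<cdot>\<^sub>m 1\<^sub>m r - cascade_F m r p H"
  define X where "X = cascade_X m r p H s"
  define L where "L = cascade_L m r H"
  define P where "P = cprod m p H 1 r s"
  have A: "A \<in> carrier_mat r r" unfolding A_def by auto
  have B: "minv A * A = 1\<^sub>m r" "minv A \<in> carrier_mat r r" using minv_left[OF A d[folded A_def]] by auto
  have X: "X \<in> carrier_mat r m" and L: "L \<in> carrier_mat m r" and P: "P \<in> carrier_mat m m"
    unfolding X_def L_def P_def by auto
  have AX: "A * X = - adj L" unfolding A_def X_def L_def by (rule cascade_resolvent_X[OF s])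
  have "minv A * (A * X) = X" using B A X by (simp add: assoc_mult_mat[symmetric, of _ r r _ r _ m])
  then have "Ja * L * minv A * (A * X) = Ja * (L * X)"
    using Ja L B A X by (simp add: assoc_mult_mat[of _ m r _ r _ m] assoc_mult_mat[of Ja m m _ r _ m])
  also have "\<dots> = Ja * P - Ja"
    unfolding L_def X_def P_def cascade_L_X using Ja
    by (simp add: mult_minus_distrib_mat[OF Ja cprod_carrier one_carrier_mat])
  finally have "Ja * L * minv A * (- adj L) + Ja = Ja * P - Ja + Ja" unfolding AX by simp
  also have "\<dots> = Ja * P" using Ja P by (intro eq_matI) auto
  finally show ?thesis unfolding A_def L_def P_def by simp
qed

lemma cascade_realization:
  fixes Ja :: "complex mat"
  assumes Ja: "Ja \<in> carrier_mat m m" "adj Ja * Ja = 1\<^sub>m m"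
    and data: "cavity_data m p H {1..r}" and stable: "\<forall>i\<in>{1..r}. Re (p i) < 0"
  shows "\<exists>N F G Hb D. F \<in> carrier_mat N N \<and> G \<in> carrier_mat N m \<and>
            Hb \<in> carrier_mat m N \<and> D \<in> carrier_mat m m \<and>
            phys_realizable N m F G Hb D \<and> hurwitz F \<and>
            (\<forall>s. s \<notin> p ` {1..r} \<and> det (s \<cdot>\<^sub>m 1\<^sub>m N - F) \<noteq> 0 \<longrightarrow>
                 Ja * cprod m p H 1 r s = Hb * minv (s \<cdot>\<^sub>m 1\<^sub>m N - F) * G + D)"
  using Ja cascade_phys_realizable[OF Ja data] cascade_F_hurwitz[OF stable] cascade_transfer[OF Ja(1)]
  by (intro exI[of _ r] exI[of _ "cascade_F m r p H"] exI[of _ "- adj (cascade_L m r H)"]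
      exI[of _ "Ja * cascade_L m r H"] exI[of _ Ja]) auto

theorem theorem4:
  fixes m n r :: nat and J :: "complex mat" and p :: "nat \<Rightarrow> complex"
    and H :: "nat \<Rightarrow> complex vec"
  assumes "m \<ge> 1" and "n \<ge> 1" and "1 \<le> r" and "r < n"
    and "J \<in> carrier_mat m m" and "adj J * J = 1\<^sub>m m"
    and "\<forall>i \<in> {1..n}. H i \<in> carrier_vec m \<and> H i \<noteq> 0\<^sub>v m"
    and "\<forall>i \<in> {1..n}. (\<Sum>a<m. cnj (H i $ a) * H i $ a) = - (p i + cnj (p i))"
  defines "K \<equiv> \<lambda>s. J * cprod m p H 1 n s"
    and "Ja \<equiv> J * cprod m p H (r+1) n 0"
  defines "Ka \<equiv> \<lambda>s. Ja * cprod m p H 1 r s"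
  shows "(\<exists>N F G Hb D. F \<in> carrier_mat N N \<and> G \<in> carrier_mat N m \<and>
            Hb \<in> carrier_mat m N \<and> D \<in> carrier_mat m m \<and>
            phys_realizable N m F G Hb D \<and> hurwitz F \<and>
            (\<forall>s. s \<notin> p ` {1..r} \<and> det (s \<cdot>\<^sub>m 1\<^sub>m N - F) \<noteq> 0 \<longrightarrow>
                 Ka s = Hb * minv (s \<cdot>\<^sub>m 1\<^sub>m N - F) * G + D))
       \<and> (\<forall>\<omega>::real. adj (Ka (\<i> * \<omega>)) * Ka (\<i> * \<omega>) = 1\<^sub>m m)
       \<and> (\<forall>\<omega>::real. \<omega> \<ge> 0 \<longrightarrow>
            opnorm (K (\<i> * \<omega>) - Ka (\<i> * \<omega>)) \<le> (\<Sum>k=1..n-r. Bterm r n p k \<omega>))"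
proof -
  have data: "cavity_data m p H {1..n}" using assms(7,8) unfolding cavity_data_def by auto
  have data_lower: "cavity_data m p H {1..r}" and data_upper: "cavity_data m p H {r+1..n}"
    using data assms(4) by (auto elim: cavity_data_subset)
  have stable: "\<forall>i\<in>{1..n}. Re (p i) < 0"
    using assms(7) by (auto intro: cavity_pole_stable[OF data])
  have Ja: "Ja \<in> carrier_mat m m" "adj Ja * Ja = 1\<^sub>m m"
    unfolding Ja_def using assms(5,6) cprod_unitary[OF data_upper]
    by (auto intro: unitary_mult)
  have "adj (Ka (\<i> * \<omega>)) * Ka (\<i> * \<omega>) = 1\<^sub>m m" for \<omega> :: real
    unfolding Ka_def using Ja cprod_unitary[OF data_lower] by (auto intro: unitary_mult)
  moreover have "opnorm (K (\<i> * \<omega>) - Ka (\<i> * \<omega>)) \<le> (\<Sum>k=1..n-r. Bterm r n p k \<omega>)" if "\<omega> \<ge> 0" for \<omega>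
    unfolding K_def Ka_def Ja_def by (rule cascade_error_bound[OF assms(3-6) data stable that])
  ultimately show ?thesis unfolding Ka_def
    using cascade_realization[OF Ja data_lower] stable assms(4) by auto
qed

end
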